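(* Let $G$ be a group. (i) If $\leq$ is a quasi-total order on $G$, then $\leq$ is admissible and for every dominant $g\in G^{++}$ the growth function $\gamma_g$ is a nonzero homogeneous quasimorphism. (ii) Conversely, for every nonzero homogeneous quasimorphism $f:G\to\mathbb{R}$ there exist a quasi-total order $\leq$ on $G$ and a dominant $g\in G^{++}$ of $(G,\leq)$ such that $f$ is a positive multiple of the growth function $\gamma_g$ of $\leq$.
   Context: A partial order $\leq$ on a group $G$ is bi-invariant if $g\leq h$ implies $gk\leq hk$ and $kg\leq kh$ for all $g,h,k\in G$. Its order semigroup is $G^+=\{g\in G: g\geq e\}$, and its set of dominants is $G^{++}=\{g\in G^+\setminus\{e\}: \forall h\in G\ \exists n\in\mathbb{N}_0,\ g^n\geq h\}$; the order is admissible if $G^{++}\neq\emptyset$. For $g\in G^{++}$ the growth function is $\gamma_g(h)=\lim_{n\to\infty}\frac{1}{n}\inf\{p\in\mathbb{Z}: g^p\geq h^n\}$. A map $f:G\to\mathbb{R}$ is a quasimorphism if $\sup_{h,k}|f(hk)-f(h)-f(k)|<\infty$, and homogeneous if $f(h^n)=nf(h)$ for all $n\in\mathbb{N}$. A half-space filtration of a set $X$ is a family $\{H_n\}_{n\in\mathbb{Z}}$ of subsets with $H_{n+1}\subsetneq H_n$ for all $n$, $\bigcap_n H_n=\emptyset$ and $\bigcup_n H_n=X$. The height of $a\in X$ is $h(a)=\sup\{n\in\mathbb{Z}: a\in H_n\}$, and $h(a,b)=h(a)-h(b)$. A triple $(X,\preceq,\{H_n\})$ is a half-space order if $(X,\preceq)$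 is a poset, $\{H_n\}$ is a half-space filtration of $X$, and there is a constant $w$ with $h(a,b)\geq w\Rightarrow a\succeq b$ for all $a,b\in X$. An action of a group $G$ on $X$ (by bijections, not necessarily order-preserving) is by quasi-automorphisms if there is $d$ with $|h(ga,gb)-h(a,b)|\leq d$ for all $g\in G$, $a,b\in X$; it is unbounded if there exist $g\in G$, $a\in X$ with $h(g^n a)\to\pm\infty$ as $n\to\pm\infty$. Given an effective $G$-action on a poset $(X,\preceq)$, the induced order on $G$ is $g\leq h :\Leftrightarrow \forall k\in G\ \forall x\in X:\ (kg).x\preceq (kh).x$; it is bi-invariant. A quasi-total order on $G$ is an order induced in this way from an effective, unbounded action by quasi-automorphisms of $G$ on some half-space order. *)

theory Defs
  imports "HOL-Analysis.Analysis" "HOL-Algebra.Group_Action"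
begin

text \<open>Groups are HOL-Algebra groups G with carrier G; partial orders on G are
  binary predicates leq, only their restriction to the carrier matters.\<close>

definition order_semigroup :: "'a monoid \<Rightarrow> ('a \<Rightarrow> 'a \<Rightarrow> bool) \<Rightarrow> 'a set" where
  "order_semigroup G leq = {g \<in> carrier G. leq \<one>\<^bsub>G\<^esub> g}"

definition dominants :: "'a monoid \<Rightarrow> ('a \<Rightarrow> 'a \<Rightarrow> bool) \<Rightarrow> 'a set" where
  "dominants G leq = {g \<in> order_semigroup G leq - {\<one>\<^bsub>G\<^esub>}.
      \<forall>h\<in>carrier G. \<exists>n::nat. leq h (g [^]\<^bsub>G\<^esub> n)}"

definition admissible :: "'a monoid \<Rightarrow> ('a \<Rightarrow> 'a \<Rightarrow> bool) \<Rightarrow> bool" where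
  "admissible G leq \<longleftrightarrow> dominants G leq \<noteq> {}"

definition growth_seq :: "'a monoid \<Rightarrow> ('a \<Rightarrow> 'a \<Rightarrow> bool) \<Rightarrow> 'a \<Rightarrow> 'a \<Rightarrow> nat \<Rightarrow> real" where
  "growth_seq G leq g h n =
     real_of_int (Inf {p::int. leq (h [^]\<^bsub>G\<^esub> n) (g [^]\<^bsub>G\<^esub> p)}) / real n"

definition growth :: "'a monoid \<Rightarrow> ('a \<Rightarrow> 'a \<Rightarrow> bool) \<Rightarrow> 'a \<Rightarrow> 'a \<Rightarrow> real" where
  "growth G leq g h = lim (growth_seq G leq g h)"

definition quasimorphism :: "'a monoid \<Rightarrow> ('a \<Rightarrow> real) \<Rightarrow> bool" where
  "quasimorphism G f \<longleftrightarrow>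
     (\<exists>D. \<forall>h\<in>carrier G. \<forall>k\<in>carrier G. \<bar>f (h \<otimes>\<^bsub>G\<^esub> k) - f h - f k\<bar> \<le> D)"

definition homogeneous :: "'a monoid \<Rightarrow> ('a \<Rightarrow> real) \<Rightarrow> bool" where
  "homogeneous G f \<longleftrightarrow> (\<forall>h\<in>carrier G. \<forall>n::nat. f (h [^]\<^bsub>G\<^esub> n) = real n * f h)"

definition half_space_filtration :: "'x set \<Rightarrow> (int \<Rightarrow> 'x set) \<Rightarrow> bool" where
  "half_space_filtration X H \<longleftrightarrow>
     (\<forall>n. H n \<subseteq> X) \<and> (\<forall>n. H (n + 1) \<subset> H n) \<and>
     (\<Inter>n. H n) = {} \<and> (\<Union>n. H n) = X"

definition height :: "(int \<Rightarrow> 'x set) \<Rightarrow> 'x \<Rightarrow> int" where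
  "height H a = Sup {n. a \<in> H n}"

definition poset_on :: "'x set \<Rightarrow> ('x \<Rightarrow> 'x \<Rightarrow> bool) \<Rightarrow> bool" where
  "poset_on X prec \<longleftrightarrow>
     (\<forall>a\<in>X. prec a a) \<and>
     (\<forall>a\<in>X. \<forall>b\<in>X. prec a b \<and> prec b a \<longrightarrow> a = b) \<and>
     (\<forall>a\<in>X. \<forall>b\<in>X. \<forall>c\<in>X. prec a b \<and> prec b c \<longrightarrow> prec a c)"

definition half_space_order :: "'x set \<Rightarrow> ('x \<Rightarrow> 'x \<Rightarrow> bool) \<Rightarrow> (int \<Rightarrow> 'x set) \<Rightarrow> bool" where
  "half_space_order X prec H \<longleftrightarrow>
     poset_on X prec \<and> half_space_filtration X H \<and>
     (\<exists>w::int. \<forall>a\<in>X. \<forall>b\<in>X. height H a - height H b \<ge> w \<longrightarrow> prec b a)"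

definition quasi_automorphic_action ::
  "'a monoid \<Rightarrow> 'x set \<Rightarrow> (int \<Rightarrow> 'x set) \<Rightarrow> ('a \<Rightarrow> 'x \<Rightarrow> 'x) \<Rightarrow> bool" where
  "quasi_automorphic_action G X H \<phi> \<longleftrightarrow>
     (\<exists>d::int. \<forall>g\<in>carrier G. \<forall>a\<in>X. \<forall>b\<in>X.
        \<bar>(height H (\<phi> g a) - height H (\<phi> g b)) - (height H a - height H b)\<bar> \<le> d)"

definition unbounded_action ::
  "'a monoid \<Rightarrow> 'x set \<Rightarrow> (int \<Rightarrow> 'x set) \<Rightarrow> ('a \<Rightarrow> 'x \<Rightarrow> 'x) \<Rightarrow> bool" where
  "unbounded_action G X H \<phi> \<longleftrightarrow>
     (\<exists>g\<in>carrier G. \<exists>a\<in>X.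
        filterlim (\<lambda>n::int. height H (\<phi> (g [^]\<^bsub>G\<^esub> n) a)) at_top at_top \<and>
        filterlim (\<lambda>n::int. height H (\<phi> (g [^]\<^bsub>G\<^esub> n) a)) at_bot at_bot)"

definition induced_order ::
  "'a monoid \<Rightarrow> 'x set \<Rightarrow> ('x \<Rightarrow> 'x \<Rightarrow> bool) \<Rightarrow> ('a \<Rightarrow> 'x \<Rightarrow> 'x) \<Rightarrow> 'a \<Rightarrow> 'a \<Rightarrow> bool" where
  "induced_order G X prec \<phi> g h \<longleftrightarrow>
     (\<forall>k\<in>carrier G. \<forall>x\<in>X. prec (\<phi> (k \<otimes>\<^bsub>G\<^esub> g) x) (\<phi> (k \<otimes>\<^bsub>G\<^esub> h) x))"

text \<open>leq is a quasi-total order on G, witnessed by the data (X, prec, H, phi):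
  an effective (faithful), unbounded action by quasi-automorphisms on a half-space order
  inducing leq on the carrier of G.\<close>

definition quasi_total_via ::
  "'a monoid \<Rightarrow> ('a \<Rightarrow> 'a \<Rightarrow> bool) \<Rightarrow> 'x set \<Rightarrow> ('x \<Rightarrow> 'x \<Rightarrow> bool) \<Rightarrow> (int \<Rightarrow> 'x set)
     \<Rightarrow> ('a \<Rightarrow> 'x \<Rightarrow> 'x) \<Rightarrow> bool" where
  "quasi_total_via G leq X prec H \<phi> \<longleftrightarrow>
     half_space_order X prec H \<and>
     faithful_action G X \<phi> \<and>
     quasi_automorphic_action G X H \<phi> \<and>
     unbounded_action G X H \<phi> \<and>
     (\<forall>g\<in>carrier G. \<forall>h\<in>carrier G. leq g h \<longleftrightarrow> induced_order G X prec \<phi> g h)"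

end

theory Submission
  imports Defs
begin

text \<open>
  Both directions rest on comparing the order with a homogeneous quasimorphism f: for some
  constant C, f h - f g \<ge> C forces g \<le> h, and g \<le> h forces f h - f g \<ge> -C. Such a comparison
  determines the least p with g^p \<ge> h^n up to a bounded error as n f(h) / f(g), so the growth
  function of g is f / f(g) whenever f(g) > 0; and every g with f(g) large enough is dominant.

  For a quasi-total order, the height displacement g \<mapsto> h(g.a) - h(a) of a base point a is a
  quasimorphism, by the quasi-automorphism bound; it is comparable to the order, by the height gap
  of the half-space order and antisymmetry; and it is unbounded. Its homogenization is the required f.
  Conversely, a homogeneous quasimorphism f is realized by the left action of G on itself,
  ordered by "f grows by at least s = f(x0) > 0", with the superlevel sets of f at the multiples
  of s as half-spaces.
\<close>
lemma Inf_int_solutions_bounds: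
  fixes P :: "int \<Rightarrow> bool" and a x K K' :: real
  assumes a: "a > 0"
    and lo: "\<And>p. P p \<Longrightarrow> x - K \<le> of_int p * a"
    and hi: "\<And>p. x + K' \<le> of_int p * a \<Longrightarrow> P p"
  shows "x / a - K / a \<le> of_int (Inf {p. P p})"
    and "of_int (Inf {p. P p}) \<le> x / a + (K' / a + 1)"
proof -
  define p0 where "p0 = \<lceil>(x + K') / a\<rceil>"
  have "x + K' \<le> of_int p0 * a"
    using a unfolding p0_def by (metis le_of_int_ceiling pos_divide_le_eq)
  then have p0: "P p0" by (rule hi)
  have above: "(x - K) / a \<le> of_int p" if "P p" for p
    using lo[OF that] a by (simp add: pos_divide_le_eq)
  have "\<lceil>(x - K) / a\<rceil> \<le> Inf {p. P p}"
    using p0 above by (intro cInf_greatest) (auto simp: ceiling_le_iff)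
  then show "x / a - K / a \<le> of_int (Inf {p. P p})"
    by (metis diff_divide_distrib le_of_int_ceiling of_int_le_iff order_trans)
  have "\<lfloor>(x - K) / a\<rfloor> \<le> p" if "P p" for p
    using above[OF that] by linarith
  then have "bdd_below {p. P p}"
    by (intro bdd_belowI) auto
  then have "Inf {p. P p} \<le> p0"
    using p0 by (intro cInf_lower) auto
  moreover have "of_int p0 \<le> (x + K') / a + 1"
    unfolding p0_def by linarith
  ultimately show "of_int (Inf {p. P p}) \<le> x / a + (K' / a + 1)"
    by (simp add: add_divide_distrib)
qed

lemma Inf_int_solutions_div_tendsto:
  fixes P :: "nat \<Rightarrow> int \<Rightarrow> bool" and a b K K' :: real
  assumes a: "a > 0"
    and lo: "\<And>n p. P n p \<Longrightarrow> real n * b - K \<le> of_int p * a"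
    and hi: "\<And>n p. real n * b + K' \<le> of_int p * a \<Longrightarrow> P n p"
  shows "(\<lambda>n. of_int (Inf {p. P n p}) / real n) \<longlonglongrightarrow> b / a"
proof (rule tendsto_sandwich)
  have lim: "(\<lambda>n. (real n * b / a + c) / real n) \<longlonglongrightarrow> b / a" for c
  proof -
    have "(\<lambda>n. b / a + c / real n) \<longlonglongrightarrow> b / a + 0"
      by (intro tendsto_intros tendsto_divide_0[OF tendsto_const] filterlim_real_sequentially)
    moreover have "\<forall>\<^sub>F n in sequentially. b / a + c / real n = (real n * b / a + c) / real n"
      using eventually_gt_at_top[of "0::nat"] by eventually_elim (simp add: field_simps)
    ultimately show ?thesis by (simp add: tendsto_cong)
  qed
  show "(\<lambda>n. (real n * b / a + - K / a) / real n) \<longlonglongrightarrow> b / a"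
    and "(\<lambda>n. (real n * b / a + (K' / a + 1)) / real n) \<longlonglongrightarrow> b / a"
    by (rule lim)+
  note bounds = Inf_int_solutions_bounds[OF a, where P = "P n" and x = "real n * b" for n]
  show "\<forall>\<^sub>F n in sequentially. (real n * b / a + - K / a) / real n \<le> of_int (Inf {p. P n p}) / real n"
    using bounds(1)[OF lo hi] by (auto intro!: always_eventually divide_right_mono)
  show "\<forall>\<^sub>F n in sequentially. of_int (Inf {p. P n p}) / real n \<le> (real n * b / a + (K' / a + 1)) / real n"
    using bounds(2)[OF lo hi] by (auto intro!: always_eventually divide_right_mono)
qed

lemma quasi_additive_mult_bound:
  fixes u :: "nat \<Rightarrow> real"
  assumes q: "\<And>m n. \<bar>u (m + n) - u m - u n\<bar> \<le> D" and "m > 0"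
  shows "\<bar>u (m * n) - real m * u n\<bar> \<le> real m * D"
  using \<open>m > 0\<close>
proof (induction m rule: nat_induct_non_zero)
  case 1
  show ?case using q[of 0 0] by simp
next
  case (Suc m)
  have "\<bar>u (n + m * n) - u n - u (m * n)\<bar> \<le> D" by (rule q)
  then show ?case using Suc.IH by (simp add: algebra_simps abs_le_iff)
qed

lemma quasi_additive_quotient_dist:
  fixes u :: "nat \<Rightarrow> real"
  assumes q: "\<And>m n. \<bar>u (m + n) - u m - u n\<bar> \<le> D" and "m > 0" "n > 0"
  shows "\<bar>u n / real n - u m / real m\<bar> \<le> D / real n + D / real m"
proof -
  have "\<bar>real m * u n - real n * u m\<bar> \<le> real m * D + real n * D"
    using quasi_additive_mult_bound[OF q, of m n] quasi_additive_mult_bound[OF q, of n m] assms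
    by (simp add: mult.commute)
  then have "\<bar>(real m * u n - real n * u m) / (real n * real m)\<bar>
      \<le> (real m * D + real n * D) / (real n * real m)"
    using assms by (simp add: abs_divide divide_right_mono)
  then show ?thesis
    using assms by (simp add: field_simps)
qed

lemma quasi_additive_quotient_Cauchy:
  fixes u :: "nat \<Rightarrow> real"
  assumes q: "\<And>m n. \<bar>u (m + n) - u m - u n\<bar> \<le> D"
  shows "Cauchy (\<lambda>n. u n / real n)"
proof (rule metric_CauchyI)
  fix e :: real assume "e > 0"
  have D: "D \<ge> 0" using q[of 0 0] by simp
  obtain M :: nat where M: "2 * D / e < real M"
    using reals_Archimedean2 by blast
  moreover have "0 \<le> 2 * D / e"
    using D \<open>e > 0\<close> by simp
  ultimately have "M > 0" by linarith
  from M \<open>e > 0\<close> \<open>M > 0\<close> have "2 * D / real M < e"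
    by (simp add: pos_divide_less_eq mult.commute)
  have "dist (u m / real m) (u n / real n) < e" if "M \<le> m" "M \<le> n" for m n
  proof -
    have "dist (u m / real m) (u n / real n) \<le> D / real m + D / real n"
      using quasi_additive_quotient_dist[OF q, of n m] that \<open>M > 0\<close> by (simp add: dist_real_def)
    also have "\<dots> \<le> D / real M + D / real M"
      using that \<open>M > 0\<close> D by (intro add_mono divide_left_mono) auto
    finally show ?thesis using \<open>2 * D / real M < e\<close> by simp
  qed
  then show "\<exists>M. \<forall>m\<ge>M. \<forall>n\<ge>M. dist (u m / real m) (u n / real n) < e" by blast
qed

lemma quasi_additive_linear_approx:
  fixes u :: "nat \<Rightarrow> real"
  assumes q: "\<And>m n. \<bar>u (m + n) - u m - u n\<bar> \<le> D"
  shows "\<exists>L. \<forall>n. \<bar>u n - real n * L\<bar> \<le> D"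
proof -
  obtain L where L: "(\<lambda>n. u n / real n) \<longlonglongrightarrow> L"
    using quasi_additive_quotient_Cauchy[OF q] Cauchy_convergent_iff convergent_def by blast
  have "\<bar>u n - real n * L\<bar> \<le> D" for n
  proof (cases "n = 0")
    case True
    then show ?thesis using q[of 0 0] by simp
  next
    case False
    have "\<bar>u n / real n - L\<bar> \<le> D / real n + 0"
    proof (rule tendsto_le[OF _ _ _ eventually_mono[OF eventually_gt_at_top[of 0]]])
      show "(\<lambda>m. D / real n + D / real m) \<longlonglongrightarrow> D / real n + 0"
        by (intro tendsto_intros tendsto_divide_0[OF tendsto_const] filterlim_real_sequentially)
      show "(\<lambda>m. \<bar>u n / real n - u m / real m\<bar>) \<longlonglongrightarrow> \<bar>u n / real n - L\<bar>"
        by (intro tendsto_intros L)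
    qed (use quasi_additive_quotient_dist[OF q] False in auto)
    then show ?thesis
      using False by (simp add: field_simps abs_divide)
  qed
  then show ?thesis by blast
qed

lemma linear_approx_unique:
  fixes u :: "nat \<Rightarrow> real"
  assumes "\<And>n. \<bar>u n - real n * L\<bar> \<le> D" and "\<And>n. \<bar>u n - real n * L'\<bar> \<le> D'"
  shows "L = L'"
proof (rule ccontr)
  assume "L \<noteq> L'"
  then have "\<bar>L - L'\<bar> > 0" by simp
  then obtain n :: nat where "D + D' < real n * \<bar>L - L'\<bar>"
    using reals_Archimedean3 by blast
  moreover have "\<bar>real n * L - real n * L'\<bar> \<le> D + D'"
    using assms[of n] by linarith
  ultimately show False by (simp add: abs_mult flip: right_diff_distrib)
qed

lemma homogeneous_one:
  fixes G :: "'a monoid" (structure)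
  assumes "group G" "homogeneous G f"
  shows "f \<one> = 0"
proof -
  interpret group G by fact
  have "f (\<one> [^] (2::nat)) = 2 * f \<one>"
    using assms unfolding homogeneous_def by (metis one_closed of_nat_numeral)
  then show ?thesis by simp
qed

lemma homogeneous_quasimorphism_inv:
  fixes G :: "'a monoid" (structure)
  assumes "group G" "quasimorphism G f" "homogeneous G f" "x \<in> carrier G"
  shows "f (inv x) = - f x"
proof -
  interpret group G by fact
  obtain D where D: "\<bar>f (inv x [^] n \<otimes> x [^] n) - f (inv x [^] n) - f (x [^] n)\<bar> \<le> D" for n :: nat
    using assms unfolding quasimorphism_def by (meson inv_closed nat_pow_closed)
  show ?thesis
  proof (rule linear_approx_unique[where u = "\<lambda>n. real n * f (inv x)" and D = 0])
    fix n :: nat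
    show "\<bar>real n * f (inv x) - real n * f (inv x)\<bar> \<le> 0" by simp
    have "inv x [^] n \<otimes> x [^] n = \<one>"
      using assms by (simp add: nat_pow_inv)
    then show "\<bar>real n * f (inv x) - real n * - f x\<bar> \<le> D"
      using D[of n] assms homogeneous_one[OF assms(1,3)] unfolding homogeneous_def by simp
  qed
qed

lemma homogeneous_quasimorphism_int_pow:
  fixes G :: "'a monoid" (structure)
  assumes "group G" "quasimorphism G f" "homogeneous G f" "x \<in> carrier G"
  shows "f (x [^] (p :: int)) = of_int p * f x"
proof -
  interpret group G by fact
  show ?thesis
  proof (cases "p \<ge> 0")
    case True
    then obtain n where "p = int n"
      by (intro that[of "nat p"]) simp
    then show ?thesis using assms unfolding homogeneous_def by (simp add: int_pow_int)
  next
    case False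
    then obtain n where "p = - int n"
      by (intro that[of "nat (- p)"]) simp
    then show ?thesis
      using assms homogeneous_quasimorphism_inv[OF assms(1-3)] unfolding homogeneous_def
      by (simp add: int_pow_neg_int)
  qed
qed

lemma homogeneous_quasimorphism_positive:
  fixes G :: "'a monoid" (structure)
  assumes "group G" "quasimorphism G f" "homogeneous G f" "x \<in> carrier G" "f x \<noteq> 0"
  obtains y where "y \<in> carrier G" "f y > 0"
proof (cases "f x > 0")
  case True
  then show ?thesis using assms(4) that by blast
next
  case False
  then have "f (inv x) > 0"
    using homogeneous_quasimorphism_inv[OF assms(1-4)] assms(5) by simp
  then show ?thesis using assms(1,4) that by (meson group.inv_closed)
qed

lemma homogenization:
  fixes G :: "'a monoid" (structure)
  assumes "group G" "quasimorphism G \<tau>"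
  obtains f d where "quasimorphism G f" "homogeneous G f" "\<And>x. x \<in> carrier G \<Longrightarrow> \<bar>f x - \<tau> x\<bar> \<le> d"
proof -
  interpret group G by fact
  obtain d where d: "\<And>x y. x \<in> carrier G \<Longrightarrow> y \<in> carrier G \<Longrightarrow> \<bar>\<tau> (x \<otimes> y) - \<tau> x - \<tau> y\<bar> \<le> d"
    using assms unfolding quasimorphism_def by blast
  have "\<forall>x\<in>carrier G. \<exists>L. \<forall>n. \<bar>\<tau> (x [^] n) - real n * L\<bar> \<le> d"
  proof (intro ballI quasi_additive_linear_approx)
    fix x and m n :: nat assume "x \<in> carrier G"
    then show "\<bar>\<tau> (x [^] (m + n)) - \<tau> (x [^] m) - \<tau> (x [^] n)\<bar> \<le> d"
      using d[of "x [^] m" "x [^] n"] by (simp add: nat_pow_mult)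
  qed
  then have "\<exists>f. \<forall>x\<in>carrier G. \<forall>n. \<bar>\<tau> (x [^] n) - real n * f x\<bar> \<le> d"
    by (rule bchoice)
  then obtain f where f: "\<And>x n. x \<in> carrier G \<Longrightarrow> \<bar>\<tau> (x [^] n) - real n * f x\<bar> \<le> d"
    by blast
  have close: "\<bar>f x - \<tau> x\<bar> \<le> d" if "x \<in> carrier G" for x
    using f[OF that, of 1] that by simp
  have qm: "quasimorphism G f"
    unfolding quasimorphism_def
  proof (intro exI ballI)
    fix x y assume "x \<in> carrier G" "y \<in> carrier G"
    then show "\<bar>f (x \<otimes> y) - f x - f y\<bar> \<le> 4 * d"
      using close[of x] close[of y] close[of "x \<otimes> y"] d[of x y] by simp
  qed
  have hom: "homogeneous G f"
    unfolding homogeneous_def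
  proof (intro ballI allI)
    fix x k assume x: "x \<in> carrier G"
    show "f (x [^] k) = real k * f x"
    proof (rule linear_approx_unique)
      fix n
      show "\<bar>\<tau> ((x [^] k) [^] n) - real n * f (x [^] k)\<bar> \<le> d" using f x by simp
      show "\<bar>\<tau> ((x [^] k) [^] n) - real n * (real k * f x)\<bar> \<le> d"
        using f[OF x, of "k * n"] x by (simp add: nat_pow_pow mult.left_commute)
    qed
  qed
  show ?thesis by (rule that[OF qm hom close])
qed

definition order_controlled_by :: "'a monoid \<Rightarrow> ('a \<Rightarrow> 'a \<Rightarrow> bool) \<Rightarrow> ('a \<Rightarrow> real) \<Rightarrow> real \<Rightarrow> bool" where
  "order_controlled_by G leq f C \<longleftrightarrow>
     (\<forall>g\<in>carrier G. \<forall>h\<in>carrier G. (C \<le> f h - f g \<longrightarrow> leq g h) \<and> (leq g h \<longrightarrow> - C \<le> f h - f g))"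

lemma order_controlled_by_perturb:
  assumes "order_controlled_by G leq \<tau> C" and "\<And>x. x \<in> carrier G \<Longrightarrow> \<bar>f x - \<tau> x\<bar> \<le> d"
  shows "order_controlled_by G leq f (C + 2 * d)"
  unfolding order_controlled_by_def
proof (intro ballI conjI impI)
  fix g h assume gh: "g \<in> carrier G" "h \<in> carrier G"
  have ctrl: "C \<le> \<tau> h - \<tau> g \<Longrightarrow> leq g h" "leq g h \<Longrightarrow> - C \<le> \<tau> h - \<tau> g"
    using assms(1) gh unfolding order_controlled_by_def by blast+
  have diff: "\<bar>(f h - f g) - (\<tau> h - \<tau> g)\<bar> \<le> 2 * d"
    using assms(2)[OF gh(1)] assms(2)[OF gh(2)] by linarith
  show "leq g h" if "C + 2 * d \<le> f h - f g"
    using that diff by (intro ctrl(1)) linarith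
  show "- (C + 2 * d) \<le> f h - f g" if "leq g h"
    using ctrl(2)[OF that] diff by linarith
qed

locale controlled_order = group G for G :: "'a monoid" (structure) +
  fixes leq :: "'a \<Rightarrow> 'a \<Rightarrow> bool" and f :: "'a \<Rightarrow> real" and C :: real
  assumes quasimorphism: "quasimorphism G f"
    and homogeneous: "homogeneous G f"
    and controlled: "order_controlled_by G leq f C"
begin

lemma leq_of_gap: "g \<in> carrier G \<Longrightarrow> h \<in> carrier G \<Longrightarrow> C \<le> f h - f g \<Longrightarrow> leq g h"
  and gap_of_leq: "g \<in> carrier G \<Longrightarrow> h \<in> carrier G \<Longrightarrow> leq g h \<Longrightarrow> - C \<le> f h - f g"
  using controlled unfolding order_controlled_by_def by blast+

lemma homogeneous_nat_pow: "x \<in> carrier G \<Longrightarrow> f (x [^] (n :: nat)) = real n * f x"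
  using homogeneous unfolding homogeneous_def by blast

lemma homogeneous_int_pow: "x \<in> carrier G \<Longrightarrow> f (x [^] (p :: int)) = of_int p * f x"
  by (rule homogeneous_quasimorphism_int_pow[OF is_group quasimorphism homogeneous])

lemma growth_seq_tendsto:
  assumes "g \<in> carrier G" "h \<in> carrier G" "f g > 0"
  shows "growth_seq G leq g h \<longlonglongrightarrow> f h / f g"
  unfolding growth_seq_def
proof (rule Inf_int_solutions_div_tendsto[where K = C and K' = C])
  fix n :: nat and p :: int
  show "real n * f h - C \<le> of_int p * f g" if "leq (h [^] n) (g [^] p)"
    using gap_of_leq[OF _ _ that] assms by (simp add: homogeneous_nat_pow homogeneous_int_pow)
  show "leq (h [^] n) (g [^] p)" if "real n * f h + C \<le> of_int p * f g"
    using leq_of_gap[of "h [^] n" "g [^] p"] that assms by (simp add: homogeneous_nat_pow homogeneous_int_pow)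
qed (use assms in simp)

lemma growth_eq:
  assumes "g \<in> carrier G" "h \<in> carrier G" "f g > 0"
  shows "growth G leq g h = f h / f g"
  unfolding growth_def using growth_seq_tendsto[OF assms] by (rule limI)

lemma dominant_of_gap:
  assumes g: "g \<in> carrier G" "f g > 0" "C \<le> f g"
  shows "g \<in> dominants G leq"
proof -
  have "leq \<one> g"
    using leq_of_gap[of \<one> g] g homogeneous_one[OF is_group homogeneous] by simp
  moreover have "g \<noteq> \<one>"
    using g homogeneous_one[OF is_group homogeneous] by auto
  moreover have "\<exists>n::nat. leq h (g [^] n)" if h: "h \<in> carrier G" for h
  proof -
    obtain n :: nat where "f h + C < real n * f g"
      using reals_Archimedean3[OF \<open>f g > 0\<close>] by blast
    then show ?thesis
      using leq_of_gap[of h "g [^] n"] g h by (auto simp: homogeneous_nat_pow)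
  qed
  ultimately show ?thesis
    unfolding dominants_def order_semigroup_def using g by auto
qed

lemma dominant_exists:
  assumes "x \<in> carrier G" "f x \<noteq> 0"
  shows "dominants G leq \<noteq> {}"
proof -
  obtain y where y: "y \<in> carrier G" "f y > 0"
    using homogeneous_quasimorphism_positive[OF is_group quasimorphism homogeneous assms] .
  obtain N :: nat where "\<bar>C\<bar> < real N * f y"
    using reals_Archimedean3[OF \<open>f y > 0\<close>] by blast
  then have "y [^] N \<in> dominants G leq"
    using y by (intro dominant_of_gap) (auto simp: homogeneous_nat_pow)
  then show ?thesis by blast
qed

lemma dominant_positive:
  assumes g: "g \<in> dominants G leq" and "x \<in> carrier G" "f x \<noteq> 0"
  shows "f g > 0"
proof (rule ccontr)
  assume "\<not> f g > 0"
  obtain y where y: "y \<in> carrier G" "f y > 0"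
    using homogeneous_quasimorphism_positive[OF is_group quasimorphism homogeneous assms(2,3)] .
  obtain m :: nat where m: "C < real m * f y"
    using reals_Archimedean3[OF \<open>f y > 0\<close>] by blast
  obtain n :: nat where "leq (y [^] m) (g [^] n)"
    using g y unfolding dominants_def by blast
  moreover have "g \<in> carrier G"
    using g unfolding dominants_def order_semigroup_def by blast
  ultimately have "- C \<le> real n * f g - real m * f y"
    using gap_of_leq[of "y [^] m" "g [^] n"] y by (simp add: homogeneous_nat_pow)
  moreover have "real n * f g \<le> 0"
    using \<open>\<not> f g > 0\<close> by (simp add: mult_nonneg_nonpos)
  ultimately show False using m by linarith
qed

lemma growth_of_dominant:
  assumes g: "g \<in> dominants G leq" and "x \<in> carrier G" "f x \<noteq> 0"
  shows "(\<forall>h\<in>carrier G. convergent (growth_seq G leq g h)) \<and>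
    quasimorphism G (growth G leq g) \<and> homogeneous G (growth G leq g) \<and>
    (\<exists>h\<in>carrier G. growth G leq g h \<noteq> 0)"
proof -
  have gc: "g \<in> carrier G" and pos: "f g > 0"
    using g dominant_positive[OF assms] unfolding dominants_def order_semigroup_def by auto
  note growth = growth_eq[OF gc _ pos]
  obtain D where D: "\<And>x y. x \<in> carrier G \<Longrightarrow> y \<in> carrier G \<Longrightarrow> \<bar>f (x \<otimes> y) - f x - f y\<bar> \<le> D"
    using quasimorphism unfolding quasimorphism_def by blast
  have "\<bar>growth G leq g (x \<otimes> y) - growth G leq g x - growth G leq g y\<bar> \<le> D / f g"
    if "x \<in> carrier G" "y \<in> carrier G" for x y
    using D[OF that] pos that
    by (simp add: growth diff_divide_distrib[symmetric] abs_divide divide_right_mono)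
  then have "quasimorphism G (growth G leq g)"
    unfolding quasimorphism_def by blast
  moreover have "homogeneous G (growth G leq g)"
    using homogeneous unfolding homogeneous_def by (simp add: growth)
  moreover have "growth G leq g g \<noteq> 0"
    using growth[OF gc] pos by simp
  ultimately show ?thesis
    using growth_seq_tendsto[OF gc _ pos] gc by (auto simp: convergent_def)
qed

end

definition displacement :: "(int \<Rightarrow> 'x set) \<Rightarrow> ('a \<Rightarrow> 'x \<Rightarrow> 'x) \<Rightarrow> 'x \<Rightarrow> 'a \<Rightarrow> real" where
  "displacement H \<phi> a g = of_int (height H (\<phi> g a) - height H a)"

locale quasi_total = group G for G :: "'a monoid" (structure) +
  fixes leq :: "'a \<Rightarrow> 'a \<Rightarrow> bool" and X :: "'x set" and prec :: "'x \<Rightarrow> 'x \<Rightarrow> bool"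
    and H :: "int \<Rightarrow> 'x set" and \<phi> :: "'a \<Rightarrow> 'x \<Rightarrow> 'x"
  assumes quasi_total: "quasi_total_via G leq X prec H \<phi>"

sublocale quasi_total \<subseteq> faithful_action G X \<phi>
  using quasi_total unfolding quasi_total_via_def by blast

context quasi_total
begin

lemma leq_iff_induced: "g \<in> carrier G \<Longrightarrow> h \<in> carrier G \<Longrightarrow> leq g h \<longleftrightarrow> induced_order G X prec \<phi> g h"
  using quasi_total unfolding quasi_total_via_def by blast

lemma prec_antisym: "a \<in> X \<Longrightarrow> b \<in> X \<Longrightarrow> prec a b \<Longrightarrow> prec b a \<Longrightarrow> a = b"
  using quasi_total unfolding quasi_total_via_def half_space_order_def poset_on_def by blast

lemma prec_of_height_gap:
  obtains w :: real where "w \<ge> 0"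
    and "\<And>a b. a \<in> X \<Longrightarrow> b \<in> X \<Longrightarrow> w \<le> of_int (height H a - height H b) \<Longrightarrow> prec b a"
proof -
  obtain w :: int where w: "\<And>a b. a \<in> X \<Longrightarrow> b \<in> X \<Longrightarrow> w \<le> height H a - height H b \<Longrightarrow> prec b a"
    using quasi_total unfolding quasi_total_via_def half_space_order_def by blast
  show ?thesis
  proof (rule that[of "of_int \<bar>w\<bar>"])
    fix a b assume "a \<in> X" "b \<in> X" "of_int \<bar>w\<bar> \<le> real_of_int (height H a - height H b)"
    then show "prec b a" using w by simp
  qed simp
qed

lemma displacement_mult:
  assumes "a \<in> X" "x \<in> carrier G" "y \<in> carrier G"
  shows "displacement H \<phi> a (x \<otimes> y) = displacement H \<phi> (\<phi> y a) x + displacement H \<phi> a y"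
  using composition_rule[OF assms] by (simp add: displacement_def)

lemma displacement_base_change:
  obtains d where "\<And>g a b. g \<in> carrier G \<Longrightarrow> a \<in> X \<Longrightarrow> b \<in> X \<Longrightarrow>
    \<bar>displacement H \<phi> a g - displacement H \<phi> b g\<bar> \<le> d"
proof -
  obtain d :: int where d: "\<And>g a b. g \<in> carrier G \<Longrightarrow> a \<in> X \<Longrightarrow> b \<in> X \<Longrightarrow>
      \<bar>(height H (\<phi> g a) - height H (\<phi> g b)) - (height H a - height H b)\<bar> \<le> d"
    using quasi_total unfolding quasi_total_via_def quasi_automorphic_action_def by blast
  have "\<bar>displacement H \<phi> a g - displacement H \<phi> b g\<bar> \<le> of_int d"
    if "g \<in> carrier G" "a \<in> X" "b \<in> X" for g a b
  proof -
    have "displacement H \<phi> a g - displacement H \<phi> b g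
        = of_int ((height H (\<phi> g a) - height H (\<phi> g b)) - (height H a - height H b))"
      by (simp add: displacement_def)
    then show ?thesis
      using d[OF that] by (metis of_int_abs of_int_le_iff)
  qed
  then show ?thesis by (rule that)
qed

lemma quasimorphism_displacement:
  assumes "a \<in> X"
  shows "quasimorphism G (displacement H \<phi> a)"
proof -
  obtain d where d: "\<And>g a b. g \<in> carrier G \<Longrightarrow> a \<in> X \<Longrightarrow> b \<in> X \<Longrightarrow>
      \<bar>displacement H \<phi> a g - displacement H \<phi> b g\<bar> \<le> d"
    using displacement_base_change by blast
  have "\<bar>displacement H \<phi> a (x \<otimes> y) - displacement H \<phi> a x - displacement H \<phi> a y\<bar> \<le> d"
    if "x \<in> carrier G" "y \<in> carrier G" for x y
  proof -
    have "\<phi> y a \<in> X"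
      using element_image[OF that(2) assms refl] .
    then show ?thesis
      using d[OF that(1) _ assms] displacement_mult[OF assms that] by simp
  qed
  then show ?thesis unfolding quasimorphism_def by blast
qed

lemma leq_of_displacement_gap:
  assumes "a \<in> X"
  obtains C where "\<And>g h. g \<in> carrier G \<Longrightarrow> h \<in> carrier G \<Longrightarrow>
    C \<le> displacement H \<phi> a h - displacement H \<phi> a g \<Longrightarrow> leq g h"
proof -
  obtain d where d: "\<And>g a b. g \<in> carrier G \<Longrightarrow> a \<in> X \<Longrightarrow> b \<in> X \<Longrightarrow>
      \<bar>displacement H \<phi> a g - displacement H \<phi> b g\<bar> \<le> d"
    using displacement_base_change by blast
  obtain w :: real where "w \<ge> 0"
    and w: "\<And>a b. a \<in> X \<Longrightarrow> b \<in> X \<Longrightarrow> w \<le> of_int (height H a - height H b) \<Longrightarrow> prec b a"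
    using prec_of_height_gap by blast
  let ?\<tau> = "displacement H \<phi>"
  have "leq g h" if g: "g \<in> carrier G" and h: "h \<in> carrier G"
    and gap: "w + 3 * d \<le> ?\<tau> a h - ?\<tau> a g" for g h
    unfolding leq_iff_induced[OF g h] induced_order_def
  proof (intro ballI)
    fix k x assume k: "k \<in> carrier G" and x: "x \<in> X"
    have gx: "\<phi> g x \<in> X" and hx: "\<phi> h x \<in> X"
      using element_image[OF g x refl] element_image[OF h x refl] .
    have kgx: "\<phi> (k \<otimes> g) x \<in> X" and khx: "\<phi> (k \<otimes> h) x \<in> X"
      using element_image[OF m_closed[OF k g] x refl] element_image[OF m_closed[OF k h] x refl] .
    have "of_int (height H (\<phi> (k \<otimes> h) x) - height H (\<phi> (k \<otimes> g) x)) = ?\<tau> x (k \<otimes> h) - ?\<tau> x (k \<otimes> g)"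
      by (simp add: displacement_def)
    also have "\<dots> = (?\<tau> (\<phi> h x) k - ?\<tau> (\<phi> g x) k) + (?\<tau> x h - ?\<tau> x g)"
      unfolding displacement_mult[OF x k h] displacement_mult[OF x k g] by simp
    also have "\<dots> \<ge> w"
      using d[OF k hx gx] d[OF h x assms] d[OF g x assms] gap by linarith
    finally show "prec (\<phi> (k \<otimes> g) x) (\<phi> (k \<otimes> h) x)"
      by (rule w[OF khx kgx])
  qed
  then show ?thesis by (rule that)
qed

lemma displacement_gap_of_leq:
  assumes "a \<in> X"
  obtains C where "\<And>g h. g \<in> carrier G \<Longrightarrow> h \<in> carrier G \<Longrightarrow> leq g h \<Longrightarrow>
    - C \<le> displacement H \<phi> a h - displacement H \<phi> a g"
proof -
  obtain w :: real where w0: "w \<ge> 0"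
    and w: "\<And>a b. a \<in> X \<Longrightarrow> b \<in> X \<Longrightarrow> w \<le> of_int (height H a - height H b) \<Longrightarrow> prec b a"
    using prec_of_height_gap by blast
  have "- w \<le> displacement H \<phi> a h - displacement H \<phi> a g"
    if g: "g \<in> carrier G" and h: "h \<in> carrier G" and "leq g h" for g h
  proof (rule ccontr)
    assume gap: "\<not> ?thesis"
    have ga: "\<phi> g a \<in> X" and ha: "\<phi> h a \<in> X"
      using element_image[OF g assms refl] element_image[OF h assms refl] .
    have "prec (\<phi> (\<one> \<otimes> g) a) (\<phi> (\<one> \<otimes> h) a)"
      using \<open>leq g h\<close> assms unfolding leq_iff_induced[OF g h] induced_order_def by blast
    moreover have "prec (\<phi> h a) (\<phi> g a)"
      using gap by (intro w ga ha) (simp add: displacement_def)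
    ultimately have "\<phi> g a = \<phi> h a"
      using prec_antisym ga ha g h by simp
    then show False
      using gap w0 by (simp add: displacement_def)
  qed
  then show ?thesis by (rule that)
qed

lemma order_controlled_by_displacement:
  assumes "a \<in> X"
  obtains C where "order_controlled_by G leq (displacement H \<phi> a) C"
proof -
  obtain C1 C2 where
    "\<And>g h. g \<in> carrier G \<Longrightarrow> h \<in> carrier G \<Longrightarrow> C1 \<le> displacement H \<phi> a h - displacement H \<phi> a g \<Longrightarrow> leq g h"
    "\<And>g h. g \<in> carrier G \<Longrightarrow> h \<in> carrier G \<Longrightarrow> leq g h \<Longrightarrow> - C2 \<le> displacement H \<phi> a h - displacement H \<phi> a g"
    using leq_of_displacement_gap displacement_gap_of_leq assms by metis
  then have "order_controlled_by G leq (displacement H \<phi> a) (max C1 C2)"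
    unfolding order_controlled_by_def by (meson max.cobounded1 max.cobounded2 neg_le_iff_le order_trans)
  then show ?thesis by (rule that)
qed

lemma displacement_unbounded:
  obtains g a where "g \<in> carrier G" "a \<in> X" "\<And>M. \<exists>n::nat. M \<le> displacement H \<phi> a (g [^] n)"
proof -
  obtain g a where ga: "g \<in> carrier G" "a \<in> X"
    and lim: "filterlim (\<lambda>n::int. height H (\<phi> (g [^] n) a)) at_top at_top"
    using quasi_total unfolding quasi_total_via_def unbounded_action_def by blast
  have "\<exists>n::nat. M \<le> displacement H \<phi> a (g [^] n)" for M
  proof -
    obtain N :: int where N: "\<And>n. N \<le> n \<Longrightarrow> \<lceil>M\<rceil> + height H a \<le> height H (\<phi> (g [^] n) a)"
      using lim unfolding filterlim_at_top eventually_at_top_linorder by blast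
    have "\<lceil>M\<rceil> + height H a \<le> height H (\<phi> (g [^] int (nat (max N 0))) a)"
      by (rule N) simp
    then have "M \<le> displacement H \<phi> a (g [^] nat (max N 0))"
      unfolding displacement_def int_pow_int by linarith
    then show ?thesis by blast
  qed
  with ga show ?thesis using that by blast
qed

lemma controlled_by_homogeneous_quasimorphism:
  obtains f C x where "controlled_order G leq f C" "x \<in> carrier G" "f x \<noteq> 0"
proof -
  obtain g a where g: "g \<in> carrier G" and a: "a \<in> X"
    and unbounded: "\<And>M. \<exists>n::nat. M \<le> displacement H \<phi> a (g [^] n)"
    using displacement_unbounded by blast
  obtain f d where qm: "quasimorphism G f" and hom: "homogeneous G f"
    and close: "\<And>x. x \<in> carrier G \<Longrightarrow> \<bar>f x - displacement H \<phi> a x\<bar> \<le> d"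
    using homogenization[OF is_group quasimorphism_displacement[OF a]] by blast
  obtain C where "order_controlled_by G leq (displacement H \<phi> a) C"
    using order_controlled_by_displacement[OF a] by blast
  then have "controlled_order G leq f (C + 2 * d)"
    by (intro controlled_order.intro controlled_order_axioms.intro is_group qm hom
        order_controlled_by_perturb[OF _ close])
  moreover have "f g \<noteq> 0"
  proof
    assume "f g = 0"
    obtain n :: nat where "d + 1 \<le> displacement H \<phi> a (g [^] n)"
      using unbounded by blast
    moreover have "displacement H \<phi> a (g [^] n) \<le> d"
      using close[of "g [^] n"] hom g \<open>f g = 0\<close> unfolding homogeneous_def by simp
    ultimately show False by linarith
  qed
  ultimately show ?thesis using g that by blast
qed

end

lemma quasi_total_growth:
  fixes G :: "'a monoid" and X :: "'x set"
  assumes "group G" and "quasi_total_via G leq X prec H \<phi>"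
  shows "admissible G leq \<and>
    (\<forall>g\<in>dominants G leq.
       (\<forall>h\<in>carrier G. convergent (growth_seq G leq g h)) \<and>
       quasimorphism G (growth G leq g) \<and> homogeneous G (growth G leq g) \<and>
       (\<exists>h\<in>carrier G. growth G leq g h \<noteq> 0))"
proof -
  interpret quasi_total G leq X prec H \<phi>
    using assms by (intro quasi_total.intro quasi_total_axioms.intro)
  obtain f C x where "controlled_order G leq f C" and x: "x \<in> carrier G" "f x \<noteq> 0"
    using controlled_by_homogeneous_quasimorphism by blast
  then interpret controlled_order G leq f C by simp
  show ?thesis
    unfolding admissible_def using dominant_exists[OF x] growth_of_dominant[OF _ x] by blast
qed

text \<open>The space of the converse construction is G itself, acted on by left translation; its
  points are encoded as singletons because the statement fixes the space to have type 'a set set.\<close>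

definition singletons :: "'a monoid \<Rightarrow> 'a set set" where
  "singletons G = (\<lambda>a. {a}) ` carrier G"

definition left_translation :: "'a monoid \<Rightarrow> 'a \<Rightarrow> 'a set \<Rightarrow> 'a set" where
  "left_translation G g = (\<lambda>S\<in>singletons G. {g \<otimes>\<^bsub>G\<^esub> the_elem S})"

definition level_order :: "('a \<Rightarrow> real) \<Rightarrow> real \<Rightarrow> 'a set \<Rightarrow> 'a set \<Rightarrow> bool" where
  "level_order f s S T \<longleftrightarrow> S = T \<or> s \<le> f (the_elem T) - f (the_elem S)"

definition level_filtration :: "'a monoid \<Rightarrow> ('a \<Rightarrow> real) \<Rightarrow> real \<Rightarrow> int \<Rightarrow> 'a set set" where
  "level_filtration G f s n = {S \<in> singletons G. of_int n * s \<le> f (the_elem S)}"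

lemma singletons_iff: "S \<in> singletons G \<longleftrightarrow> (\<exists>a\<in>carrier G. S = {a})"
  unfolding singletons_def by auto

lemma left_translation_singleton:
  "a \<in> carrier G \<Longrightarrow> left_translation G g {a} = {g \<otimes>\<^bsub>G\<^esub> a}"
  unfolding left_translation_def singletons_def by simp

lemma faithful_action_left_translation:
  fixes G :: "'a monoid" (structure)
  assumes "group G"
  shows "faithful_action G (singletons G) (left_translation G)"
proof -
  interpret group G by fact
  have bij: "left_translation G g \<in> Bij (singletons G)" if g: "g \<in> carrier G" for g
  proof -
    have "bij_betw (left_translation G g) (singletons G) (singletons G)"
      by (rule bij_betw_byWitness[where f' = "left_translation G (inv g)"])
        (use g in \<open>auto simp: singletons_iff left_translation_singleton m_assoc [symmetric]\<close>)
    then show ?thesis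
      unfolding Bij_def left_translation_def by simp
  qed
  have "left_translation G (x \<otimes> y) = compose (singletons G) (left_translation G x) (left_translation G y)"
    if "x \<in> carrier G" "y \<in> carrier G" for x y
  proof
    fix S show "left_translation G (x \<otimes> y) S = compose (singletons G) (left_translation G x) (left_translation G y) S"
      using that by (cases "S \<in> singletons G")
        (auto simp: singletons_iff left_translation_singleton compose_def m_assoc left_translation_def)
  qed
  then have "group_action G (singletons G) (left_translation G)"
    unfolding group_action_def group_hom_def group_hom_axioms_def hom_def
    using bij group_BijGroup[of "singletons G"] is_group by (auto simp: BijGroup_def)
  moreover have "inj_on (left_translation G) (carrier G)"
  proof (rule inj_onI)
    fix g h assume gh: "g \<in> carrier G" "h \<in> carrier G" and "left_translation G g = left_translation G h"
    then have "left_translation G g {\<one>} = left_translation G h {\<one>}" by simp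
    then show "g = h"
      using gh by (simp add: left_translation_singleton)
  qed
  ultimately show ?thesis
    unfolding faithful_action_def faithful_action_axioms_def by blast
qed

lemma height_level_filtration:
  assumes "s > 0" "S \<in> singletons G"
  shows "height (level_filtration G f s) S = \<lfloor>f (the_elem S) / s\<rfloor>"
proof -
  have "{n. S \<in> level_filtration G f s n} = {..\<lfloor>f (the_elem S) / s\<rfloor>}"
    using assms by (auto simp: level_filtration_def le_floor_iff pos_le_divide_eq)
  then show ?thesis
    unfolding height_def by simp
qed

lemma half_space_filtration_level:
  fixes G :: "'a monoid" (structure)
  assumes "group G" and s: "s > 0" and x0: "x0 \<in> carrier G"
    and lin: "\<And>n :: int. f (x0 [^] n) = of_int n * s"
  shows "half_space_filtration (singletons G) (level_filtration G f s)"
proof -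
  interpret group G by fact
  let ?H = "level_filtration G f s"
  have strict: "?H (n + 1) \<subset> ?H n" for n
  proof
    show "?H (n + 1) \<subseteq> ?H n"
      using s by (auto simp: level_filtration_def algebra_simps)
    have "{x0 [^] n} \<in> ?H n - ?H (n + 1)"
      using x0 s lin[of n] by (auto simp: level_filtration_def singletons_iff algebra_simps)
    then show "?H (n + 1) \<noteq> ?H n" by blast
  qed
  have "S \<notin> ?H (\<lceil>f (the_elem S) / s\<rceil> + 1)" for S
  proof
    assume "S \<in> ?H (\<lceil>f (the_elem S) / s\<rceil> + 1)"
    then have "of_int \<lceil>f (the_elem S) / s\<rceil> * s + s \<le> f (the_elem S)"
      by (simp add: level_filtration_def algebra_simps)
    moreover have "f (the_elem S) \<le> of_int \<lceil>f (the_elem S) / s\<rceil> * s"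
      using s by (simp add: pos_divide_le_eq[symmetric])
    ultimately show False using s by linarith
  qed
  then have inter: "(\<Inter>n. ?H n) = {}" by blast
  have union: "(\<Union>n. ?H n) = singletons G"
  proof (intro equalityI subsetI)
    fix S assume "S \<in> singletons G"
    moreover have "of_int \<lfloor>f (the_elem S) / s\<rfloor> * s \<le> f (the_elem S)"
      using s by (simp add: pos_le_divide_eq[symmetric])
    ultimately show "S \<in> (\<Union>n. ?H n)"
      by (auto simp: level_filtration_def)
  qed (auto simp: level_filtration_def)
  show ?thesis
    unfolding half_space_filtration_def using strict inter union by (auto simp: level_filtration_def)
qed

lemma half_space_order_level:
  fixes G :: "'a monoid" (structure)
  assumes "group G" and s: "s > 0" and x0: "x0 \<in> carrier G"
    and lin: "\<And>n :: int. f (x0 [^] n) = of_int n * s"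
  shows "half_space_order (singletons G) (level_order f s) (level_filtration G f s)"
proof -
  let ?H = "level_filtration G f s"
  have "level_order f s b a"
    if "a \<in> singletons G" "b \<in> singletons G" "2 \<le> height ?H a - height ?H b" for a b
  proof -
    have "2 \<le> \<lfloor>f (the_elem a) / s\<rfloor> - \<lfloor>f (the_elem b) / s\<rfloor>"
      using that height_level_filtration[OF s, of _ G f] by simp
    then have "1 < f (the_elem a) / s - f (the_elem b) / s"
      by linarith
    then show ?thesis
      using s by (simp add: level_order_def diff_divide_distrib[symmetric] less_divide_eq)
  qed
  moreover have "poset_on (singletons G) (level_order f s)"
    using s unfolding poset_on_def level_order_def by auto
  ultimately show ?thesis
    unfolding half_space_order_def using half_space_filtration_level[OF assms] by blast
qed

lemma quasi_automorphic_left_translation: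
  fixes G :: "'a monoid" (structure)
  assumes "group G" "quasimorphism G f" "s > 0"
  shows "quasi_automorphic_action G (singletons G) (level_filtration G f s) (left_translation G)"
proof -
  interpret group G by fact
  obtain D where D: "\<And>x y. x \<in> carrier G \<Longrightarrow> y \<in> carrier G \<Longrightarrow> \<bar>f (x \<otimes> y) - f x - f y\<bar> \<le> D"
    using assms(2) unfolding quasimorphism_def by blast
  let ?ht = "height (level_filtration G f s)"
  have "\<bar>(?ht (left_translation G g S) - ?ht (left_translation G g T)) - (?ht S - ?ht T)\<bar> \<le> \<lceil>2 * D / s\<rceil> + 2"
    if g: "g \<in> carrier G" and ST: "S \<in> singletons G" "T \<in> singletons G" for g S T
  proof -
    obtain a b where ab: "a \<in> carrier G" "b \<in> carrier G" "S = {a}" "T = {b}"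
      using ST by (auto simp: singletons_iff)
    have "\<bar>(f (g \<otimes> a) - f (g \<otimes> b)) - (f a - f b)\<bar> \<le> 2 * D"
      using D[OF g ab(1)] D[OF g ab(2)] by linarith
    then have "\<bar>(f (g \<otimes> a) / s - f (g \<otimes> b) / s) - (f a / s - f b / s)\<bar> \<le> 2 * D / s"
      using assms(3) by (simp add: diff_divide_distrib[symmetric] abs_divide divide_right_mono)
    moreover have "2 * D / s \<le> of_int \<lceil>2 * D / s\<rceil>"
      by (rule le_of_int_ceiling)
    ultimately have "\<bar>(\<lfloor>f (g \<otimes> a) / s\<rfloor> - \<lfloor>f (g \<otimes> b) / s\<rfloor>) - (\<lfloor>f a / s\<rfloor> - \<lfloor>f b / s\<rfloor>)\<bar> \<le> \<lceil>2 * D / s\<rceil> + 2"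
      by (simp add: abs_le_iff) linarith
    moreover have "{g \<otimes> a} \<in> singletons G" "{g \<otimes> b} \<in> singletons G"
      using g ab by (auto simp: singletons_iff)
    ultimately show ?thesis
      using ab g ST assms(3) by (simp add: left_translation_singleton height_level_filtration)
  qed
  then show ?thesis
    unfolding quasi_automorphic_action_def by blast
qed

lemma unbounded_left_translation:
  fixes G :: "'a monoid" (structure)
  assumes "group G" "s > 0" and x0: "x0 \<in> carrier G"
    and lin: "\<And>n :: int. f (x0 [^] n) = of_int n * s"
  shows "unbounded_action G (singletons G) (level_filtration G f s) (left_translation G)"
proof -
  interpret group G by fact
  have "height (level_filtration G f s) (left_translation G (x0 [^] n) {\<one>}) = n" for n :: int
    using x0 assms(2) lin[of n]
    by (simp add: left_translation_singleton height_level_filtration singletons_iff)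
  then show ?thesis
    unfolding unbounded_action_def using x0
    by (intro bexI[of _ x0] bexI[of _ "{\<one>}"]) (auto simp: singletons_iff filterlim_ident)
qed

lemma order_controlled_by_left_translation:
  fixes G :: "'a monoid" (structure)
  assumes "group G" "quasimorphism G f" "s > 0"
  obtains C where "order_controlled_by G
    (induced_order G (singletons G) (level_order f s) (left_translation G)) f C"
proof -
  interpret group G by fact
  obtain D where D: "\<And>x y. x \<in> carrier G \<Longrightarrow> y \<in> carrier G \<Longrightarrow> \<bar>f (x \<otimes> y) - f x - f y\<bar> \<le> D"
    using assms(2) unfolding quasimorphism_def by blast
  have D0: "D \<ge> 0" using D[of \<one> \<one>] by simp
  let ?leq = "induced_order G (singletons G) (level_order f s) (left_translation G)"
  have "?leq g h" if gh: "g \<in> carrier G" "h \<in> carrier G" and gap: "s + 4 * D \<le> f h - f g" for g h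
    unfolding induced_order_def
  proof (intro ballI)
    fix k S assume k: "k \<in> carrier G" and "S \<in> singletons G"
    then obtain a where a: "a \<in> carrier G" "S = {a}" by (auto simp: singletons_iff)
    have "s \<le> f (k \<otimes> h \<otimes> a) - f (k \<otimes> g \<otimes> a)"
      using D[of "k \<otimes> g" a] D[of k g] D[of "k \<otimes> h" a] D[of k h] gap gh k a by simp
    then show "level_order f s (left_translation G (k \<otimes> g) S) (left_translation G (k \<otimes> h) S)"
      using a gh k by (simp add: left_translation_singleton level_order_def)
  qed
  moreover have "f g \<le> f h" if gh: "g \<in> carrier G" "h \<in> carrier G" and "?leq g h" for g h
  proof -
    have "level_order f s (left_translation G (\<one> \<otimes> g) {\<one>}) (left_translation G (\<one> \<otimes> h) {\<one>})"
      using \<open>?leq g h\<close> unfolding induced_order_def by (simp add: singletons_iff)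
    then show ?thesis
      using gh assms(3) by (auto simp: left_translation_singleton level_order_def)
  qed
  ultimately have "order_controlled_by G ?leq f (s + 4 * D)"
    unfolding order_controlled_by_def using assms(3) D0 by force
  then show ?thesis by (rule that)
qed

lemma quasi_total_left_translation:
  fixes G :: "'a monoid" (structure)
  assumes "group G" "quasimorphism G f" "homogeneous G f" "x \<in> carrier G" "f x \<noteq> 0"
  shows "\<exists>(X :: 'a set set) prec H \<phi> C. quasi_total_via G (induced_order G X prec \<phi>) X prec H \<phi> \<and>
    controlled_order G (induced_order G X prec \<phi>) f C"
proof -
  obtain x0 where x0: "x0 \<in> carrier G" "f x0 > 0"
    using homogeneous_quasimorphism_positive[OF assms] .
  define s where "s = f x0"
  have s: "s > 0" unfolding s_def by (rule x0(2))
  have lin: "f (x0 [^] n) = of_int n * s" for n :: int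
    unfolding s_def by (rule homogeneous_quasimorphism_int_pow[OF assms(1-3) x0(1)])
  let ?leq = "induced_order G (singletons G) (level_order f s) (left_translation G)"
  obtain C where "order_controlled_by G ?leq f C"
    using order_controlled_by_left_translation[OF assms(1,2) s] by blast
  then have "controlled_order G ?leq f C"
    by (intro controlled_order.intro controlled_order_axioms.intro assms(1-3))
  moreover have "quasi_total_via G ?leq (singletons G) (level_order f s) (level_filtration G f s) (left_translation G)"
    unfolding quasi_total_via_def
    using half_space_order_level[OF assms(1) s x0(1) lin] faithful_action_left_translation[OF assms(1)]
      quasi_automorphic_left_translation[OF assms(1,2) s] unbounded_left_translation[OF assms(1) s x0(1) lin]
    by blast
  ultimately show ?thesis by blast
qed

lemma homogeneous_quasimorphism_growth:
  fixes G :: "'a monoid"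
  assumes "group G" "quasimorphism G f" "homogeneous G f" "x \<in> carrier G" "f x \<noteq> 0"
  shows "\<exists>(leq :: 'a \<Rightarrow> 'a \<Rightarrow> bool) (X :: 'a set set) prec H \<phi> g c.
    quasi_total_via G leq X prec H \<phi> \<and> g \<in> dominants G leq \<and> c > 0 \<and>
    (\<forall>h\<in>carrier G. f h = c * growth G leq g h)"
proof -
  obtain X :: "'a set set" and prec H \<phi> C
    where qt: "quasi_total_via G (induced_order G X prec \<phi>) X prec H \<phi>"
      and "controlled_order G (induced_order G X prec \<phi>) f C"
    using quasi_total_left_translation[OF assms] by blast
  then interpret controlled_order G "induced_order G X prec \<phi>" f C by simp
  obtain g where g: "g \<in> dominants G (induced_order G X prec \<phi>)"
    using dominant_exists[OF assms(4,5)] by blast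
  have pos: "f g > 0" and "g \<in> carrier G"
    using dominant_positive[OF g assms(4,5)] g unfolding dominants_def order_semigroup_def by auto
  then have "\<forall>h\<in>carrier G. f h = f g * growth G (induced_order G X prec \<phi>) g h"
    by (simp add: growth_eq)
  with qt g pos show ?thesis by blast
qed

theorem theorem1p3:
  fixes G :: "'a monoid"
  assumes "group G"
  shows
    "(\<forall>(leq :: 'a \<Rightarrow> 'a \<Rightarrow> bool) (X :: 'x set) prec H \<phi>.
        quasi_total_via G leq X prec H \<phi> \<longrightarrow>
          admissible G leq \<and>
          (\<forall>g\<in>dominants G leq.
             (\<forall>h\<in>carrier G. convergent (growth_seq G leq g h)) \<and>
             quasimorphism G (growth G leq g) \<and>
             homogeneous G (growth G leq g) \<and>
             (\<exists>h\<in>carrier G. growth G leq g h \<noteq> 0)))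
     \<and>
     (\<forall>f :: 'a \<Rightarrow> real.
        quasimorphism G f \<and> homogeneous G f \<and> (\<exists>h\<in>carrier G. f h \<noteq> 0) \<longrightarrow>
          (\<exists>(leq :: 'a \<Rightarrow> 'a \<Rightarrow> bool) (X :: 'a set set) prec H \<phi> g c.
              quasi_total_via G leq X prec H \<phi> \<and>
              g \<in> dominants G leq \<and> c > (0::real) \<and>
              (\<forall>h\<in>carrier G. f h = c * growth G leq g h)))"
  using quasi_total_growth[OF assms] homogeneous_quasimorphism_growth[OF assms] by blast

end
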